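(* For every graph $U$ containing no $K_{\aleph_0}$ subgraph, there is a graph $\widehat{U}\in\mathcal{D}(U)$ that contains every graph in $\mathcal{D}(U)$.
   Context: All graphs are simple and countable; $G$ contains $H$ if $H$ is isomorphic to a subgraph of $G$. A tree-decomposition of $G$ is a family $(B_x:x\in V(T))$ of subsets of $V(G)$ indexed by a tree $T$ with every edge of $G$ inside some bag and, for each vertex $v$, $\{x:v\in B_x\}$ inducing a nonempty subtree of $T$. The torso of a node $x$ is the graph obtained from $G[B_x]$ by adding an edge $vw$ whenever $v,w\in B_x\cap B_y$ for some edge $xy\in E(T)$. $\mathcal{D}(U)$ is the class of graphs having a tree-decomposition in which every torso is isomorphic to a subgraph of $U$. *)

theory Defs
  imports Main "HOL-Library.Countable_Set"
begin

definition simple_graph :: "'a set \<Rightarrow> ('a \<Rightarrow> 'a \<Rightarrow> bool) \<Rightarrow> bool" where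
  "simple_graph V E \<longleftrightarrow> (\<forall>x y. E x y \<longrightarrow> x \<in> V \<and> y \<in> V \<and> x \<noteq> y \<and> E y x)"

definition cgraph :: "'a set \<Rightarrow> ('a \<Rightarrow> 'a \<Rightarrow> bool) \<Rightarrow> bool" where
  "cgraph V E \<longleftrightarrow> simple_graph V E \<and> countable V"

definition contains ::
  "'a set \<Rightarrow> ('a \<Rightarrow> 'a \<Rightarrow> bool) \<Rightarrow> 'b set \<Rightarrow> ('b \<Rightarrow> 'b \<Rightarrow> bool) \<Rightarrow> bool" where
  "contains V E V' E' \<longleftrightarrow> (\<exists>f. inj_on f V' \<and> f ` V' \<subseteq> V \<and>
      (\<forall>x\<in>V'. \<forall>y\<in>V'. E' x y \<longrightarrow> E (f x) (f y)))"

definition K_aleph0_V :: "nat set" where "K_aleph0_V = UNIV"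
definition K_aleph0_E :: "nat \<Rightarrow> nat \<Rightarrow> bool" where "K_aleph0_E x y \<longleftrightarrow> x \<noteq> y"

definition connected_graph :: "'a set \<Rightarrow> ('a \<Rightarrow> 'a \<Rightarrow> bool) \<Rightarrow> bool" where
  "connected_graph V E \<longleftrightarrow> (\<forall>x\<in>V. \<forall>y\<in>V.
      (\<lambda>a b. E a b \<and> a \<in> V \<and> b \<in> V)\<^sup>*\<^sup>* x y)"

definition has_cycle :: "'a set \<Rightarrow> ('a \<Rightarrow> 'a \<Rightarrow> bool) \<Rightarrow> bool" where
  "has_cycle V E \<longleftrightarrow> (\<exists>xs. length xs \<ge> 3 \<and> distinct xs \<and> set xs \<subseteq> V \<and>
      (\<forall>i. Suc i < length xs \<longrightarrow> E (xs ! i) (xs ! Suc i)) \<and> E (last xs) (hd xs))"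

definition is_tree :: "'a set \<Rightarrow> ('a \<Rightarrow> 'a \<Rightarrow> bool) \<Rightarrow> bool" where
  "is_tree V E \<longleftrightarrow> simple_graph V E \<and> V \<noteq> {} \<and> connected_graph V E \<and> \<not> has_cycle V E"

definition tree_decomposition ::
  "'a set \<Rightarrow> ('a \<Rightarrow> 'a \<Rightarrow> bool) \<Rightarrow> 't set \<Rightarrow> ('t \<Rightarrow> 't \<Rightarrow> bool) \<Rightarrow> ('t \<Rightarrow> 'a set) \<Rightarrow> bool" where
  "tree_decomposition V E VT ET B \<longleftrightarrow>
     is_tree VT ET \<and>
     (\<forall>x\<in>VT. B x \<subseteq> V) \<and>
     (\<forall>v w. E v w \<longrightarrow> (\<exists>x\<in>VT. v \<in> B x \<and> w \<in> B x)) \<and>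
     (\<forall>v\<in>V. {x \<in> VT. v \<in> B x} \<noteq> {} \<and> connected_graph {x \<in> VT. v \<in> B x} ET)"

definition torso_E ::
  "('a \<Rightarrow> 'a \<Rightarrow> bool) \<Rightarrow> ('t \<Rightarrow> 't \<Rightarrow> bool) \<Rightarrow> ('t \<Rightarrow> 'a set) \<Rightarrow> 't \<Rightarrow> 'a \<Rightarrow> 'a \<Rightarrow> bool" where
  "torso_E E ET B x v w \<longleftrightarrow> v \<in> B x \<and> w \<in> B x \<and> v \<noteq> w \<and>
      (E v w \<or> (\<exists>y. ET x y \<and> v \<in> B y \<and> w \<in> B y))"

text \<open>G is in D(U): G has a tree-decomposition (over a countable tree) all of whose
torsos are isomorphic to subgraphs of U.\<close>
definition in_D ::
  "'u set \<Rightarrow> ('u \<Rightarrow> 'u \<Rightarrow> bool) \<Rightarrow> nat set \<Rightarrow> (nat \<Rightarrow> nat \<Rightarrow> bool) \<Rightarrow> bool" where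
  "in_D VU EU V E \<longleftrightarrow> (\<exists>(VT::nat set) ET B. tree_decomposition V E VT ET B \<and>
      (\<forall>x\<in>VT. contains VU EU (B x) (torso_E E ET B x)))"

end

theory Submission
  imports Defs "HOL-Library.Sublist"
begin

text \<open>
  The universal graph is the free tree-like amalgam of copies of \<open>U\<close>: starting from one copy,
  glue on, countably often, a new copy of \<open>U\<close> along every finite partial bijection between a
  clique of the new copy and a clique of an existing copy, and repeat indefinitely. Only
  finite gluings occur, so the result is countable, and its construction tree is a
  tree-decomposition whose torsos are copies of \<open>U\<close>, because every adhesion set is a clique
  on both sides.

  Conversely, let \<open>G\<close> have a tree-decomposition \<open>(T, B)\<close> whose torsos embed into \<open>U\<close>. Root
  \<open>T\<close>. The adhesion set between a node and its parent is a clique in both torsos, hence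
  finite because \<open>U\<close> has no infinite clique, so it is one of the gluings used above.
  Following these gluings from the root copy assigns a copy of \<open>U\<close> to every node of \<open>T\<close>, and
  each vertex of \<open>G\<close> is sent into the copy at the highest node whose bag contains it. As the
  bags containing a vertex form a subtree, the vertex is identified along every gluing below
  that node, so all bags are mapped consistently and \<open>G\<close> embeds.
\<close>

section \<open>Cliques, cycles and relabelling\<close>

definition clique :: "'a set \<Rightarrow> ('a \<Rightarrow> 'a \<Rightarrow> bool) \<Rightarrow> 'a set \<Rightarrow> bool" where
  "clique V E C \<longleftrightarrow> C \<subseteq> V \<and> (\<forall>a\<in>C. \<forall>b\<in>C. a \<noteq> b \<longrightarrow> E a b)"

lemma finite_clique:
  assumes no_K: "\<not> contains V E K_aleph0_V K_aleph0_E" and C: "clique V E C"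
  shows "finite C"
proof (rule ccontr)
  assume "infinite C"
  then obtain f :: "nat \<Rightarrow> _" where f: "inj f" "range f \<subseteq> C"
    using infinite_countable_subset by blast
  have "contains V E K_aleph0_V K_aleph0_E"
    unfolding contains_def K_aleph0_V_def K_aleph0_E_def
  proof (intro exI[of _ f] conjI ballI impI)
    show "inj_on f UNIV" "range f \<subseteq> V" using f C by (auto simp: clique_def)
    fix x y :: nat assume "x \<noteq> y"
    then have "f x \<noteq> f y" using f(1) by (simp add: inj_eq)
    then show "E (f x) (f y)" using f(2) C unfolding clique_def by blast
  qed
  with no_K show False ..
qed

lemma connected_graphI_hub:
  assumes sym: "\<And>a b. E a b \<Longrightarrow> E b a"
    and hub: "\<And>x. x \<in> V \<Longrightarrow> (\<lambda>a b. E a b \<and> a \<in> V \<and> b \<in> V)\<^sup>*\<^sup>* x c"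
  shows "connected_graph V E"
proof -
  let ?R = "\<lambda>a b. E a b \<and> a \<in> V \<and> b \<in> V"
  have "symp ?R\<^sup>*\<^sup>*" by (rule symp_rtranclp) (auto intro: sympI sym)
  then show ?thesis
    unfolding connected_graph_def using hub by (meson rtranclp_trans sympD)
qed

lemma has_cycleI_fun:
  assumes n: "3 \<le> n" and inj: "inj_on c {..<n}" and V: "\<And>k. k < n \<Longrightarrow> c k \<in> V"
    and step: "\<And>k. Suc k < n \<Longrightarrow> E (c k) (c (Suc k))" and close: "E (c (n - 1)) (c 0)"
  shows "has_cycle V E"
  unfolding has_cycle_def
proof (intro exI[of _ "map c [0..<n]"] conjI allI impI)
  show "3 \<le> length (map c [0..<n])" "set (map c [0..<n]) \<subseteq> V" using n V by auto
  show "distinct (map c [0..<n])" using inj by (simp add: distinct_map lessThan_atLeast0)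
  show "E (map c [0..<n] ! k) (map c [0..<n] ! Suc k)" if "Suc k < length (map c [0..<n])" for k
    using that step by simp
  have "last (map c [0..<n]) = c (n - 1)" "hd (map c [0..<n]) = c 0"
    using n by (simp_all add: last_map hd_map)
  with close show "E (last (map c [0..<n])) (hd (map c [0..<n]))" by simp
qed

lemma cycle_neighbours:
  assumes n: "3 \<le> length xs" and step: "\<forall>i. Suc i < length xs \<longrightarrow> E (xs ! i) (xs ! Suc i)"
    and close: "E (last xs) (hd xs)" and i: "i < length xs"
  obtains j j' where "j < length xs" "j' < length xs" "j \<noteq> j'"
    "E (xs ! j) (xs ! i)" "E (xs ! i) (xs ! j')"
proof -
  define m where "m = length xs - 1"
  have "xs \<noteq> []" using n by auto
  then have ends: "last xs = xs ! m" "hd xs = xs ! 0"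
    by (simp_all add: m_def last_conv_nth hd_conv_nth)
  consider "i = 0" | "i = m" | "0 < i" "i < m" using i m_def by linarith
  then show thesis
  proof cases
    case 1
    then show thesis using step ends close n m_def by (intro that[of m 1]) auto
  next
    case 2
    have "Suc (m - 1) = m" "m < length xs" using n m_def by simp_all
    then have "E (xs ! (m - 1)) (xs ! m)" using step by metis
    then show thesis using 2 ends close n m_def by (intro that[of "m - 1" 0]) auto
  next
    case 3
    have "Suc (i - 1) = i" using 3 by simp
    then have "E (xs ! (i - 1)) (xs ! i)" using step i by metis
    then show thesis using step 3 m_def by (intro that[of "i - 1" "Suc i"]) auto
  qed
qed

lemma not_has_cycle_if_edges_descend:
  fixes rank :: "'a \<Rightarrow> nat"
  assumes descend: "\<And>x y. E x y \<Longrightarrow> (y = p x \<and> rank y < rank x) \<or> (x = p y \<and> rank x < rank y)"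
  shows "\<not> has_cycle V E"
proof
  assume "has_cycle V E"
  then obtain xs where n: "3 \<le> length xs" and dist: "distinct xs"
    and step: "\<forall>i. Suc i < length xs \<longrightarrow> E (xs ! i) (xs ! Suc i)" and close: "E (last xs) (hd xs)"
    unfolding has_cycle_def by blast
  have "Max (rank ` set xs) \<in> rank ` set xs" using n by (intro Max_in) auto
  then obtain i where i: "i < length xs" "rank (xs ! i) = Max (rank ` set xs)"
    by (auto simp: in_set_conv_nth)
  have maximal: "rank (xs ! k) \<le> rank (xs ! i)" if "k < length xs" for k
    using that i(2) by simp
  obtain j j' where j: "j < length xs" "j' < length xs" "j \<noteq> j'"
    and e: "E (xs ! j) (xs ! i)" "E (xs ! i) (xs ! j')"
    using cycle_neighbours[OF n step close i(1)] .
  have "xs ! j = p (xs ! i)" "xs ! j' = p (xs ! i)"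
    using descend[OF e(1)] descend[OF e(2)] maximal[OF j(1)] maximal[OF j(2)] by auto
  then have "xs ! j = xs ! j'" by simp
  with j dist show False by (simp add: nth_eq_iff_index_eq)
qed

definition map_edges :: "('a \<Rightarrow> 'b) \<Rightarrow> ('a \<Rightarrow> 'a \<Rightarrow> bool) \<Rightarrow> 'b \<Rightarrow> 'b \<Rightarrow> bool" where
  "map_edges f E a b \<longleftrightarrow> (\<exists>v w. E v w \<and> a = f v \<and> b = f w)"

lemma map_edges_inv_into:
  assumes "inj_on f V" "simple_graph V E" "map_edges f E a b"
  shows "E (inv_into V f a) (inv_into V f b)"
  using assms unfolding map_edges_def simple_graph_def by auto

lemma simple_graph_map_edges:
  assumes f: "inj_on f V" and G: "simple_graph V E"
  shows "simple_graph (f ` V) (map_edges f E)"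
  unfolding simple_graph_def
proof (intro allI impI)
  fix a b assume "map_edges f E a b"
  then obtain v w where e: "E v w" "a = f v" "b = f w" unfolding map_edges_def by blast
  then have "v \<in> V" "w \<in> V" "v \<noteq> w" "E w v" using G unfolding simple_graph_def by blast+
  with e f show "a \<in> f ` V \<and> b \<in> f ` V \<and> a \<noteq> b \<and> map_edges f E b a"
    unfolding map_edges_def by (auto dest: inj_onD)
qed

lemma contains_map_edges_iff:
  assumes f: "inj_on f V" and G: "simple_graph V E"
  shows "contains (f ` V) (map_edges f E) X Y \<longleftrightarrow> contains V E X Y"
proof
  assume "contains (f ` V) (map_edges f E) X Y"
  then obtain F where F: "inj_on F X" "F ` X \<subseteq> f ` V"
    "\<forall>x\<in>X. \<forall>y\<in>X. Y x y \<longrightarrow> map_edges f E (F x) (F y)"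
    unfolding contains_def by blast
  have "inj_on (inv_into V f) (f ` V)" by (rule inj_on_inv_into) simp
  moreover have "inv_into V f (F x) \<in> V" if "x \<in> X" for x
    using that F(2) by (blast intro: inv_into_into)
  ultimately show "contains V E X Y" unfolding contains_def
    using F map_edges_inv_into[OF f G]
    by (intro exI[of _ "inv_into V f \<circ> F"])
      (auto intro: comp_inj_on inj_on_subset inv_into_into)
next
  assume "contains V E X Y"
  then obtain F where F: "inj_on F X" "F ` X \<subseteq> V" "\<forall>x\<in>X. \<forall>y\<in>X. Y x y \<longrightarrow> E (F x) (F y)"
    unfolding contains_def by blast
  have "inj_on (f \<circ> F) X" using F(1) inj_on_subset[OF f F(2)] by (rule comp_inj_on)
  moreover have "(f \<circ> F) ` X \<subseteq> f ` V" using F(2) by auto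
  moreover have "map_edges f E ((f \<circ> F) x) ((f \<circ> F) y)" if "x \<in> X" "y \<in> X" "Y x y" for x y
    using F(3) that unfolding map_edges_def by auto
  ultimately show "contains (f ` V) (map_edges f E) X Y" unfolding contains_def by blast
qed

lemma in_D_map_edges_iff:
  assumes "inj_on f VU" "simple_graph VU EU"
  shows "in_D (f ` VU) (map_edges f EU) V E \<longleftrightarrow> in_D VU EU V E"
  unfolding in_D_def by (simp add: contains_map_edges_iff[OF assms])

lemma connected_graph_map_edges:
  assumes f: "inj f" and G: "connected_graph V E"
  shows "connected_graph (f ` V) (map_edges f E)"
proof -
  have walk: "(\<lambda>a b. map_edges f E a b \<and> a \<in> f ` V \<and> b \<in> f ` V)\<^sup>*\<^sup>* (f x) (f y)"
    if "(\<lambda>a b. E a b \<and> a \<in> V \<and> b \<in> V)\<^sup>*\<^sup>* x y" for x y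
    using that
  proof (induction rule: rtranclp_induct)
    case (step y z)
    then have "map_edges f E (f y) (f z) \<and> f y \<in> f ` V \<and> f z \<in> f ` V"
      unfolding map_edges_def by blast
    with step.IH show ?case by (rule rtranclp.rtrancl_into_rtrancl)
  qed simp
  show ?thesis
    using G walk unfolding connected_graph_def by blast
qed

lemma has_cycle_map_edges:
  assumes f: "inj f" and cyc: "has_cycle (f ` V) (map_edges f E)"
  shows "has_cycle V E"
proof -
  obtain xs where xs: "3 \<le> length xs" "distinct xs" "set xs \<subseteq> f ` V"
    "\<forall>i. Suc i < length xs \<longrightarrow> map_edges f E (xs ! i) (xs ! Suc i)"
    "map_edges f E (last xs) (hd xs)"
    using cyc unfolding has_cycle_def by blast
  have E: "E (inv f a) (inv f b)" if "map_edges f E a b" for a b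
    using that f unfolding map_edges_def by auto
  have "xs \<noteq> []" using xs(1) by auto
  moreover have "inj_on (inv f) (set xs)"
    using xs(3) by (intro inj_on_inv_into) blast
  moreover have "set (map (inv f) xs) \<subseteq> V" using xs(3) f by auto
  ultimately show ?thesis unfolding has_cycle_def using xs E
    by (intro exI[of _ "map (inv f) xs"]) (auto simp: distinct_map last_map hd_map)
qed

lemma is_tree_map_edges: "inj f \<Longrightarrow> is_tree V E \<Longrightarrow> is_tree (f ` V) (map_edges f E)"
  unfolding is_tree_def
  using simple_graph_map_edges connected_graph_map_edges has_cycle_map_edges
  by (metis image_is_empty inj_on_subset subset_UNIV)

lemma tree_decomposition_map_edges:
  assumes g: "inj g" and h: "inj h" and td: "tree_decomposition V E VT ET B"
  shows "tree_decomposition (g ` V) (map_edges g E) (h ` VT) (map_edges h ET) (\<lambda>t. g ` B (inv h t))"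
  unfolding tree_decomposition_def
proof (intro conjI ballI allI impI)
  show "is_tree (h ` VT) (map_edges h ET)"
    using is_tree_map_edges[OF h] td unfolding tree_decomposition_def by blast
  show "g ` B (inv h t) \<subseteq> g ` V" if "t \<in> h ` VT" for t
    using that h td unfolding tree_decomposition_def by fastforce
  fix a b assume "map_edges g E a b"
  then obtain v w where "E v w" "a = g v" "b = g w" unfolding map_edges_def by blast
  moreover obtain x where "x \<in> VT" "v \<in> B x" "w \<in> B x"
    using td \<open>E v w\<close> unfolding tree_decomposition_def by blast
  ultimately show "\<exists>t\<in>h ` VT. a \<in> g ` B (inv h t) \<and> b \<in> g ` B (inv h t)"
    using h by (intro bexI[of _ "h x"]) auto
next
  fix a assume "a \<in> g ` V"
  then obtain v where v: "v \<in> V" "a = g v" by blast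
  have eq: "{t \<in> h ` VT. a \<in> g ` B (inv h t)} = h ` {x \<in> VT. v \<in> B x}"
    using v g h by (auto dest: injD)
  show "{t \<in> h ` VT. a \<in> g ` B (inv h t)} \<noteq> {}"
    using eq td v unfolding tree_decomposition_def by auto
  show "connected_graph {t \<in> h ` VT. a \<in> g ` B (inv h t)} (map_edges h ET)"
    unfolding eq using connected_graph_map_edges[OF h] td v
    unfolding tree_decomposition_def by blast
qed

lemma torso_E_map_edges:
  assumes g: "inj g" and h: "inj h"
    and "torso_E (map_edges g E) (map_edges h ET) (\<lambda>t. g ` B (inv h t)) (h x) (g v) (g w)"
  shows "torso_E E ET B x v w"
  using assms unfolding torso_E_def map_edges_def by (auto simp: inj_eq[OF g] inj_eq[OF h])

lemma in_D_of_tree_decomposition: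
  fixes g :: "'v \<Rightarrow> nat" and h :: "'t \<Rightarrow> nat" and B :: "'t \<Rightarrow> 'v set"
  assumes g: "inj g" and h: "inj h" and td: "tree_decomposition V E VT ET B"
    and torso: "\<And>x. x \<in> VT \<Longrightarrow> contains VU EU (B x) (torso_E E ET B x)"
  shows "in_D VU EU (g ` V) (map_edges g E)"
  unfolding in_D_def
proof (intro exI conjI ballI)
  let ?B = "\<lambda>t. g ` B (inv h t)"
  show "tree_decomposition (g ` V) (map_edges g E) (h ` VT) (map_edges h ET) ?B"
    by (rule tree_decomposition_map_edges[OF g h td])
  fix t assume "t \<in> h ` VT"
  then obtain x where x: "x \<in> VT" "t = h x" by blast
  obtain F where F: "inj_on F (B x)" "F ` B x \<subseteq> VU"
    "\<forall>a\<in>B x. \<forall>b\<in>B x. torso_E E ET B x a b \<longrightarrow> EU (F a) (F b)"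
    using torso[OF x(1)] unfolding contains_def by blast
  have "inj_on (F \<circ> inv g) (g ` B x)" using F(1) g by (auto simp: inj_on_def)
  moreover have "(F \<circ> inv g) ` g ` B x \<subseteq> VU" using F(2) g by auto
  moreover have "EU ((F \<circ> inv g) a) ((F \<circ> inv g) b)"
    if "a \<in> g ` B x" "b \<in> g ` B x" "torso_E (map_edges g E) (map_edges h ET) ?B (h x) a b" for a b
    using that F(3) torso_E_map_edges[OF g h] g by auto
  ultimately show "contains VU EU (?B t) (torso_E (map_edges g E) (map_edges h ET) ?B t)"
    unfolding contains_def x(2) using h by (intro exI[of _ "F \<circ> inv g"]) auto
qed

section \<open>Rooted trees\<close>

locale rooted_tree =
  fixes VT :: "'t set" and ET :: "'t \<Rightarrow> 't \<Rightarrow> bool" and root :: 't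
  assumes tree: "is_tree VT ET" and root_in: "root \<in> VT"
begin

abbreviation tree_step :: "'t \<Rightarrow> 't \<Rightarrow> bool" where
  "tree_step a b \<equiv> ET a b \<and> a \<in> VT \<and> b \<in> VT"

definition depth :: "'t \<Rightarrow> nat" where
  "depth x = (LEAST n. (tree_step ^^ n) root x)"

definition parent :: "'t \<Rightarrow> 't" where
  "parent x = (if x = root then root else SOME y. y \<in> VT \<and> ET y x \<and> Suc (depth y) = depth x)"

lemma simple_tree: "simple_graph VT ET"
  using tree unfolding is_tree_def by blast

lemma edge_sym: "ET a b \<Longrightarrow> ET b a"
  and edge_in_VT: "ET a b \<Longrightarrow> a \<in> VT \<and> b \<in> VT"
  and edge_neq: "ET a b \<Longrightarrow> a \<noteq> b"
  using simple_tree unfolding simple_graph_def by blast+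

lemma relpowp_depth: "x \<in> VT \<Longrightarrow> (tree_step ^^ depth x) root x"
proof -
  assume "x \<in> VT"
  moreover have "connected_graph VT ET" using tree unfolding is_tree_def by blast
  ultimately have "tree_step\<^sup>*\<^sup>* root x"
    using root_in unfolding connected_graph_def by blast
  then obtain n where "(tree_step ^^ n) root x" by (blast dest: rtranclp_imp_relpowp)
  then show ?thesis unfolding depth_def by (rule LeastI)
qed

lemma depth_le_Suc: "ET y x \<Longrightarrow> depth x \<le> Suc (depth y)"
proof -
  assume e: "ET y x"
  then have "(tree_step ^^ Suc (depth y)) root x"
    using edge_in_VT by (intro relpowp_Suc_I[OF relpowp_depth]) auto
  then show ?thesis unfolding depth_def by (rule Least_le)
qed

lemma depth_root [simp]: "depth root = 0"
  unfolding depth_def by (rule Least_eq_0) simp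

lemma depth_eq_0_iff:
  assumes "x \<in> VT"
  shows "depth x = 0 \<longleftrightarrow> x = root"
proof
  assume "depth x = 0"
  with relpowp_depth[OF assms] show "x = root" by simp
qed simp

lemma parent_root [simp]: "parent root = root"
  by (simp add: parent_def)

lemma parent_spec:
  assumes x: "x \<in> VT" "x \<noteq> root"
  shows "parent x \<in> VT \<and> ET (parent x) x \<and> Suc (depth (parent x)) = depth x"
proof -
  obtain n where n: "depth x = Suc n" using depth_eq_0_iff x not0_implies_Suc by blast
  then have "(tree_step ^^ Suc n) root x" using relpowp_depth[OF x(1)] by simp
  then obtain y where y: "(tree_step ^^ n) root y" "tree_step y x" by (rule relpowp_Suc_E)
  then have "depth y \<le> n" unfolding depth_def by (intro Least_le)
  with y n depth_le_Suc[of y x] have "\<exists>y. y \<in> VT \<and> ET y x \<and> Suc (depth y) = depth x"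
    by (intro exI[of _ y]) auto
  from someI_ex[OF this] show ?thesis unfolding parent_def using x(2) by simp
qed

lemma parent_in: "x \<in> VT \<Longrightarrow> parent x \<in> VT"
  using parent_spec[of x] root_in by (cases "x = root") auto

lemma depth_parent: "x \<in> VT \<Longrightarrow> depth (parent x) = depth x - 1"
  using parent_spec[of x] by (cases "x = root") auto

lemma funpow_parent_in: "x \<in> VT \<Longrightarrow> (parent ^^ k) x \<in> VT"
  by (induction k) (auto simp: parent_in)

lemma depth_funpow_parent: "x \<in> VT \<Longrightarrow> depth ((parent ^^ k) x) = depth x - k"
  by (induction k) (auto simp: depth_parent funpow_parent_in)

lemma funpow_parent_depth: "x \<in> VT \<Longrightarrow> (parent ^^ depth x) x = root"
  using depth_funpow_parent[of x "depth x"] funpow_parent_in depth_eq_0_iff by auto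

lemma funpow_parent_inj:
  "x \<in> VT \<Longrightarrow> k \<le> depth x \<Longrightarrow> k' \<le> depth x \<Longrightarrow> (parent ^^ k) x = (parent ^^ k') x \<Longrightarrow> k = k'"
  using depth_funpow_parent[of x k] depth_funpow_parent[of x k'] by auto

lemma edge_funpow_parent:
  assumes "x \<in> VT" "k < depth x"
  shows "ET ((parent ^^ Suc k) x) ((parent ^^ k) x)"
proof -
  have "(parent ^^ k) x \<noteq> root"
    using assms depth_funpow_parent[of x k] by auto
  then show ?thesis using parent_spec funpow_parent_in assms(1) by simp
qed

lemma first_common_ancestor:
  assumes x: "x \<in> VT" and y: "y \<in> VT"
  obtains i j where "i \<le> depth x" "j \<le> depth y" "(parent ^^ i) x = (parent ^^ j) y"
    "\<forall>i' < i. \<forall>j' \<le> depth y. (parent ^^ i') x \<noteq> (parent ^^ j') y"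
proof -
  define meets where "meets i \<longleftrightarrow> (\<exists>j \<le> depth y. (parent ^^ i) x = (parent ^^ j) y)" for i
  have "meets (depth x)"
    unfolding meets_def using funpow_parent_depth x y by auto
  then obtain i where i: "meets i" "\<And>i'. meets i' \<Longrightarrow> i \<le> i'"
    using ex_has_least_nat[of meets "depth x" id] by auto
  then obtain j where "j \<le> depth y" "(parent ^^ i) x = (parent ^^ j) y"
    unfolding meets_def by blast
  with i \<open>meets (depth x)\<close> show thesis
    by (intro that[of i j]) (auto simp: meets_def not_le[symmetric])
qed

lemma inj_on_ancestor_chains:
  assumes x: "x \<in> VT" and y: "y \<in> VT" and i: "i \<le> depth x" and j: "j \<le> depth y"
    and meet: "(parent ^^ i) x = (parent ^^ j) y"
    and first: "\<forall>i' < i. \<forall>j' \<le> depth y. (parent ^^ i') x \<noteq> (parent ^^ j') y"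
  shows "inj_on (\<lambda>k. if k \<le> i then (parent ^^ k) x else (parent ^^ (i + j - k)) y) {..<i + j + 1}"
    (is "inj_on ?c _")
proof -
  have low_high: "?c k \<noteq> ?c k'" if "k \<le> i" "i < k'" "k' < i + j + 1" for k k'
  proof (cases "k < i")
    case True
    then show ?thesis using first[rule_format, of k "i + j - k'"] that j by simp
  next
    case False
    have "i + j - k' < j" "i + j - k' \<le> depth y" using that j by auto
    then have "(parent ^^ (i + j - k')) y \<noteq> (parent ^^ j) y"
      using funpow_parent_inj[OF y, of "i + j - k'" j] j by auto
    then show ?thesis using False that meet by simp
  qed
  show ?thesis
  proof (rule inj_onI)
    fix k k' assume k: "k \<in> {..<i + j + 1}" and k': "k' \<in> {..<i + j + 1}" and eq: "?c k = ?c k'"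
    consider "k \<le> i" "k' \<le> i" | "i < k" "i < k'" | "k \<le> i" "i < k'" | "i < k" "k' \<le> i"
      by linarith
    then show "k = k'"
    proof cases
      case 1
      then show ?thesis using eq funpow_parent_inj[OF x] i by simp
    next
      case 2
      then have "i + j - k = i + j - k'"
        using eq funpow_parent_inj[OF y, of "i + j - k" "i + j - k'"] k k' j by simp
      then show ?thesis using 2 k k' by simp
    qed (use low_high[of k k'] low_high[of k' k] k k' eq in auto)
  qed
qed

lemma has_cycle_via_common_ancestor:
  assumes e: "ET x y" and i: "i \<le> depth x" and j: "j \<le> depth y" "j \<noteq> 0" and ij: "2 \<le> i + j"
    and meet: "(parent ^^ i) x = (parent ^^ j) y"
    and first: "\<forall>i' < i. \<forall>j' \<le> depth y. (parent ^^ i') x \<noteq> (parent ^^ j') y"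
  shows "has_cycle VT ET"
proof -
  have x: "x \<in> VT" and y: "y \<in> VT" using e edge_in_VT by auto
  define c where "c k = (if k \<le> i then (parent ^^ k) x else (parent ^^ (i + j - k)) y)" for k
  have c_low: "k \<le> i \<Longrightarrow> c k = (parent ^^ k) x"
    and c_high: "i \<le> k \<Longrightarrow> c k = (parent ^^ (i + j - k)) y" for k
    using meet by (auto simp: c_def)
  show ?thesis
  proof (rule has_cycleI_fun[of "i + j + 1" c])
    show "3 \<le> i + j + 1" using ij by simp
    show "inj_on c {..<i + j + 1}"
      unfolding c_def using inj_on_ancestor_chains[OF x y i j(1) meet first] .
    show "c k \<in> VT" for k using funpow_parent_in x y by (simp add: c_def)
    show "ET (c (i + j + 1 - 1)) (c 0)" using c_low c_high e edge_sym by simp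
    show "ET (c k) (c (Suc k))" if "Suc k < i + j + 1" for k
    proof (cases "Suc k \<le> i")
      case True
      then show ?thesis using c_low edge_funpow_parent[OF x] i edge_sym by simp
    next
      case False
      then have "i + j - k = Suc (i + j - Suc k)" "i + j - Suc k < depth y" using that j by auto
      then show ?thesis using c_high False edge_funpow_parent[OF y] by simp
    qed
  qed
qed

lemma edge_parent_or_child:
  assumes e: "ET x y"
  shows "(x \<noteq> root \<and> y = parent x) \<or> (y \<noteq> root \<and> x = parent y)"
proof (rule ccontr)
  assume not_parent: "\<not> ?thesis"
  have x: "x \<in> VT" and y: "y \<in> VT" and "x \<noteq> y" using e edge_in_VT edge_neq by auto
  obtain i j where i: "i \<le> depth x" and j: "j \<le> depth y"
    and meet: "(parent ^^ i) x = (parent ^^ j) y"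
    and first: "\<forall>i' < i. \<forall>j' \<le> depth y. (parent ^^ i') x \<noteq> (parent ^^ j') y"
    using first_common_ancestor[OF x y] .
  have "j \<noteq> 0"
  proof
    assume "j = 0"
    then have up: "(parent ^^ i) x = y" using meet by simp
    consider "i = 0" | "i = 1" | "2 \<le> i" by linarith
    then show False
    proof cases
      case 3
      have "depth y = depth x - i" using up depth_funpow_parent[OF x] by metis
      with 3 i depth_le_Suc[OF edge_sym[OF e]] show False by linarith
    qed (use up \<open>x \<noteq> y\<close> not_parent in auto)
  qed
  have "2 \<le> i + j"
  proof (rule ccontr)
    assume "\<not> 2 \<le> i + j"
    then have "i = 0" "j = 1" using \<open>j \<noteq> 0\<close> by auto
    then have "x = parent y" using meet by simp
    with \<open>x \<noteq> y\<close> not_parent show False by auto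
  qed
  then have "has_cycle VT ET"
    using has_cycle_via_common_ancestor[OF e i j \<open>j \<noteq> 0\<close> _ meet first] by blast
  then show False using tree unfolding is_tree_def by blast
qed

lemma descendant_if_walk_avoids_parent:
  assumes out: "parent x \<notin> S" and walk: "(\<lambda>a b. ET a b \<and> a \<in> S \<and> b \<in> S)\<^sup>*\<^sup>* x z"
  shows "\<exists>k. (parent ^^ k) z = x"
  using walk
proof (induction rule: rtranclp_induct)
  case base
  show ?case by (rule exI[of _ 0]) simp
next
  case (step z z')
  then obtain k where k: "(parent ^^ k) z = x" by blast
  from step.hyps(2) have "ET z z'" "z \<in> S" "z' \<in> S" by auto
  from edge_parent_or_child[OF this(1)] show ?case
  proof
    assume z': "z \<noteq> root \<and> z' = parent z"
    then obtain k' where "k = Suc k'" using k out \<open>z' \<in> S\<close> by (cases k) auto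
    then have "(parent ^^ k') z' = x" using k z' by (simp add: funpow_Suc_right del: funpow.simps)
    then show ?thesis by blast
  next
    assume "z' \<noteq> root \<and> z = parent z'"
    then have "(parent ^^ Suc k) z' = x" using k by (simp add: funpow_Suc_right del: funpow.simps)
    then show ?thesis by blast
  qed
qed

lemma parent_in_connected:
  assumes S: "S \<subseteq> VT" "connected_graph S ET"
    and m: "m \<in> S" "\<And>y. y \<in> S \<Longrightarrow> depth m \<le> depth y"
    and x: "x \<in> S" "x \<noteq> m"
  shows "parent x \<in> S"
proof (rule ccontr)
  assume out: "parent x \<notin> S"
  have "(\<lambda>a b. ET a b \<and> a \<in> S \<and> b \<in> S)\<^sup>*\<^sup>* x m"
    using S m x unfolding connected_graph_def by blast
  then obtain k where k: "(parent ^^ k) m = x"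
    using descendant_if_walk_avoids_parent[OF out] by blast
  have "depth x = depth m - k" using k depth_funpow_parent m S by blast
  with m(2)[OF x(1)] have "k = 0 \<or> depth m = 0" by linarith
  moreover have "(parent ^^ k) root = root" by (induction k) auto
  ultimately show False using k x m S depth_eq_0_iff by auto
qed

end

section \<open>The universal graph\<close>

lemma suffix_Cons_if_strict_suffix:
  assumes "suffix q t" "q \<noteq> t"
  obtains l where "suffix (l # q) t"
proof -
  obtain r where r: "t = r @ q" "r \<noteq> []" using assms unfolding suffix_def by auto
  then have "t = butlast r @ (last r # q)" by simp
  then show thesis using that unfolding suffix_def by blast
qed

text \<open>
  A node of the construction tree is the list of gluings on its path to the root. A gluing is
  a partial bijection between cliques of the child copy and of the parent copy, listed as pairs
  (child vertex, parent vertex), together with a tag, so that every gluing is used countably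
  often. A vertex of the universal graph is named by its home, the highest node whose copy
  contains it, and its vertex of \<open>U\<close> there; \<open>canon s u\<close> is this name for the vertex \<open>u\<close> of the
  copy at \<open>s\<close>.
\<close>

type_synonym gluing = "(nat \<times> nat) list \<times> nat"
type_synonym node = "gluing list"
type_synonym uvertex = "node \<times> nat"

fun canon :: "node \<Rightarrow> nat \<Rightarrow> uvertex" where
  "canon [] u = ([], u)"
| "canon (l # s) u = (case map_of (fst l) u of Some a \<Rightarrow> canon s a | None \<Rightarrow> (l # s, u))"

lemma suffix_fst_canon: "suffix (fst (canon s u)) s"
  by (induction s arbitrary: u) (auto simp: suffix_ConsI split: option.split)

lemma fst_canon_Cons_eq_iff: "fst (canon (l # s) u) = l # s \<longleftrightarrow> map_of (fst l) u = None"
proof (cases "map_of (fst l) u")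
  case (Some a)
  then have "length (fst (canon (l # s) u)) \<le> length s"
    using suffix_fst_canon[of s a] by (simp add: suffix_length_le)
  with Some show ?thesis by auto
qed simp

lemma canon_Cons_eq_canon:
  assumes "canon (l # s) u = canon s w"
  obtains a where "map_of (fst l) u = Some a" "canon (l # s) u = canon s a"
proof -
  have "fst (canon (l # s) u) \<noteq> l # s"
    using assms suffix_fst_canon[of s w] suffix_length_le by fastforce
  then obtain a where "map_of (fst l) u = Some a"
    using fst_canon_Cons_eq_iff by fastforce
  with that show thesis by simp
qed

locale host_graph =
  fixes VU :: "nat set" and EU :: "nat \<Rightarrow> nat \<Rightarrow> bool"
  assumes simple: "simple_graph VU EU"
begin

definition gluing_ok :: "gluing \<Rightarrow> bool" where
  "gluing_ok l \<longleftrightarrow> distinct (map fst (fst l)) \<and> distinct (map snd (fst l)) \<and>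
     clique VU EU (fst ` set (fst l)) \<and> clique VU EU (snd ` set (fst l))"

definition nodes :: "node set" where
  "nodes = {s. \<forall>l\<in>set s. gluing_ok l}"

definition node_edge :: "node \<Rightarrow> node \<Rightarrow> bool" where
  "node_edge s t \<longleftrightarrow> s \<in> nodes \<and> t \<in> nodes \<and> ((\<exists>l. s = l # t) \<or> (\<exists>l. t = l # s))"

definition bag :: "node \<Rightarrow> uvertex set" where
  "bag s = canon s ` VU"

definition univ_V :: "uvertex set" where
  "univ_V = (\<Union>s\<in>nodes. bag s)"

definition univ_E :: "uvertex \<Rightarrow> uvertex \<Rightarrow> bool" where
  "univ_E a b \<longleftrightarrow> (\<exists>s\<in>nodes. \<exists>u w. EU u w \<and> a = canon s u \<and> b = canon s w)"

lemma nodes_Nil [simp]: "[] \<in> nodes"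
  and nodes_Cons [simp]: "l # s \<in> nodes \<longleftrightarrow> gluing_ok l \<and> s \<in> nodes"
  by (auto simp: nodes_def)

lemma nodes_suffix: "t \<in> nodes \<Longrightarrow> suffix s t \<Longrightarrow> s \<in> nodes"
  by (auto simp: nodes_def suffix_def)

lemma edge_in_VU: "EU u w \<Longrightarrow> u \<in> VU \<and> w \<in> VU \<and> u \<noteq> w"
  using simple unfolding simple_graph_def by blast

lemma gluing_ok_pair:
  assumes "gluing_ok l" "(u, a) \<in> set (fst l)"
  shows "u \<in> VU" "a \<in> VU"
  using assms by (force simp: gluing_ok_def clique_def)+

lemma gluing_ok_snd_inj:
  assumes "gluing_ok l" "(u, a) \<in> set (fst l)" "(w, a) \<in> set (fst l)"
  shows "u = w"
  using assms unfolding gluing_ok_def by (metis distinct_map inj_on_eq_iff snd_conv fst_conv)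

lemma inj_on_canon: "s \<in> nodes \<Longrightarrow> inj_on (canon s) VU"
proof (induction s)
  case (Cons l s)
  then have l: "gluing_ok l" and IH: "inj_on (canon s) VU" by auto
  show ?case
  proof (rule inj_onI)
    fix u w assume "u \<in> VU" "w \<in> VU" and eq: "canon (l # s) u = canon (l # s) w"
    have "map_of (fst l) u = None \<longleftrightarrow> map_of (fst l) w = None"
      using eq fst_canon_Cons_eq_iff by metis
    then consider "map_of (fst l) u = None" "map_of (fst l) w = None"
      | a b where "map_of (fst l) u = Some a" "map_of (fst l) w = Some b" by fastforce
    then show "u = w"
    proof cases
      case 1
      then show ?thesis using eq by simp
    next
      case 2
      then have ua: "(u, a) \<in> set (fst l)" and wb: "(w, b) \<in> set (fst l)"
        by (auto dest: map_of_SomeD)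
      have "canon s a = canon s b" using eq 2 by simp
      then have "a = b"
        using IH gluing_ok_pair[OF l ua] gluing_ok_pair[OF l wb] by (auto dest: inj_onD)
      then show ?thesis using gluing_ok_snd_inj[OF l ua] wb by simp
    qed
  qed
qed (simp add: inj_on_def)

lemma canon_in_bag_suffix:
  assumes "t \<in> nodes" "u \<in> VU" "suffix q t" "suffix (fst (canon t u)) q"
  shows "canon t u \<in> bag q"
  using assms
proof (induction t arbitrary: u)
  case Nil
  then show ?case by (simp add: bag_def)
next
  case (Cons l s)
  show ?case
  proof (cases "q = l # s")
    case True
    then show ?thesis using Cons.prems by (simp add: bag_def)
  next
    case False
    then have "suffix q s" using Cons.prems(3) by (simp add: suffix_Cons)
    show ?thesis
    proof (cases "map_of (fst l) u")
      case None
      then have "suffix (l # s) q" using Cons.prems(4) by simp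
      then have "length (l # s) \<le> length s"
        using \<open>suffix q s\<close> suffix_length_le order_trans by blast
      then show ?thesis by simp
    next
      case (Some a)
      then have "(u, a) \<in> set (fst l)" by (rule map_of_SomeD)
      then have "a \<in> VU" using gluing_ok_pair(2)[of l u a] Cons.prems(1) by simp
      then show ?thesis using Cons Some \<open>suffix q s\<close> by simp
    qed
  qed
qed

lemma adhesion_clique:
  assumes ls: "l # s \<in> nodes" and "u \<noteq> w"
    and u: "canon (l # s) u = canon s u'" "u' \<in> VU"
    and w: "canon (l # s) w = canon s w'" "w' \<in> VU"
  shows "EU u w \<and> EU u' w'"
proof -
  have l: "gluing_ok l" and s: "s \<in> nodes" using ls by auto
  obtain a where a: "map_of (fst l) u = Some a" "canon (l # s) u = canon s a"
    using canon_Cons_eq_canon[OF u(1)] .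
  obtain b where b: "map_of (fst l) w = Some b" "canon (l # s) w = canon s b"
    using canon_Cons_eq_canon[OF w(1)] .
  have ua: "(u, a) \<in> set (fst l)" and wb: "(w, b) \<in> set (fst l)"
    using a b by (auto dest: map_of_SomeD)
  have "a = u'" "b = w'"
    using a b u w inj_on_canon[OF s] gluing_ok_pair[OF l ua] gluing_ok_pair[OF l wb]
    by (auto dest: inj_onD)
  moreover have "a \<noteq> b" using gluing_ok_snd_inj[OF l ua] wb \<open>u \<noteq> w\<close> by auto
  ultimately show ?thesis
    using l ua wb \<open>u \<noteq> w\<close> unfolding gluing_ok_def clique_def by force
qed

lemma bag_overlap_clique:
  assumes s: "s \<in> nodes" and t: "t \<in> nodes" "s \<noteq> t"
    and uw: "u \<in> VU" "w \<in> VU" "u \<noteq> w" and in_t: "canon s u \<in> bag t" "canon s w \<in> bag t"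
  shows "EU u w"
proof -
  obtain u' w' where u': "u' \<in> VU" "canon s u = canon t u'"
    and w': "w' \<in> VU" "canon s w = canon t w'"
    using in_t by (auto simp: bag_def)
  txt \<open>
    Let \<open>q\<close> be the lower of the two homes. If \<open>s\<close> lies strictly below \<open>q\<close>, both vertices are
    already in the copy at the parent of \<open>s\<close>; otherwise \<open>s = q\<close>, and both lie in the copy at
    the child of \<open>q\<close> towards \<open>t\<close>. Either way the two vertices are glued along a clique.
  \<close>
  define q where "q = (if suffix (fst (canon s u)) (fst (canon s w))
    then fst (canon s w) else fst (canon s u))"
  have homes: "suffix (fst (canon s u)) q" "suffix (fst (canon s w)) q"
    using suffix_same_cases[OF suffix_fst_canon suffix_fst_canon] unfolding q_def by auto
  have q: "suffix q s" "suffix q t"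
    using suffix_fst_canon[of s] suffix_fst_canon[of t] u'(2) w'(2) unfolding q_def by metis+
  show ?thesis
  proof (cases "s = q")
    case False
    then obtain l s' where s': "s = l # s'" "suffix q s'"
      using q(1) by (cases s) (auto simp: suffix_Cons)
    have "canon s u \<in> bag s'" "canon s w \<in> bag s'"
      using canon_in_bag_suffix[OF s] uw homes s' suffix_order.trans by (auto simp: suffix_ConsI)
    then obtain u'' w'' where
      "u'' \<in> VU" "canon s u = canon s' u''" "w'' \<in> VU" "canon s w = canon s' w''"
      by (auto simp: bag_def)
    then show ?thesis using adhesion_clique[of l s' u w u'' w''] s s' uw by simp
  next
    case True
    then obtain l where l: "suffix (l # q) t"
      using q(2) t(2) by (auto elim: suffix_Cons_if_strict_suffix)
    have "canon t u' \<in> bag (l # q)" "canon t w' \<in> bag (l # q)"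
      using canon_in_bag_suffix[OF t(1)] u' w' homes l by (auto simp: suffix_ConsI)
    then obtain u2 w2 where u2: "u2 \<in> VU" "canon (l # q) u2 = canon q u"
      and w2: "w2 \<in> VU" "canon (l # q) w2 = canon q w"
      using u' w' True by (auto simp: bag_def)
    have "u2 \<noteq> w2" using u2 w2 uw inj_on_canon[OF s] True by (auto dest: inj_onD)
    moreover have "l # q \<in> nodes" using nodes_suffix[OF t(1) l] .
    ultimately show ?thesis using adhesion_clique[of l q u2 w2 u w] u2 w2 uw by simp
  qed
qed

lemma univ_E_canonD:
  assumes s: "s \<in> nodes" and uw: "u \<in> VU" "w \<in> VU" and e: "univ_E (canon s u) (canon s w)"
  shows "EU u w"
proof -
  obtain t u' w' where t: "t \<in> nodes" and e': "EU u' w'"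
    and u': "canon s u = canon t u'" and w': "canon s w = canon t w'"
    using e unfolding univ_E_def by blast
  have "u' \<in> VU" "w' \<in> VU" "u' \<noteq> w'" using edge_in_VU[OF e'] by auto
  then have "u \<noteq> w" using u' w' inj_on_canon[OF t] by (auto dest: inj_onD)
  show ?thesis
  proof (cases "s = t")
    case True
    then have "u = u'" "w = w'" using u' w' uw inj_on_canon[OF s] \<open>u' \<in> VU\<close> \<open>w' \<in> VU\<close>
      by (auto dest: inj_onD)
    then show ?thesis using e' by simp
  next
    case False
    have "canon s u \<in> bag t" "canon s w \<in> bag t"
      using u' w' \<open>u' \<in> VU\<close> \<open>w' \<in> VU\<close> by (auto simp: bag_def)
    then show ?thesis using bag_overlap_clique[OF s t False uw \<open>u \<noteq> w\<close>] by blast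
  qed
qed

lemma torso_univ_canonD:
  assumes s: "s \<in> nodes" and uw: "u \<in> VU" "w \<in> VU"
    and tor: "torso_E univ_E node_edge bag s (canon s u) (canon s w)"
  shows "EU u w"
proof -
  have "u \<noteq> w" using tor unfolding torso_E_def by auto
  from tor consider "univ_E (canon s u) (canon s w)"
    | t where "node_edge s t" "canon s u \<in> bag t" "canon s w \<in> bag t"
    unfolding torso_E_def by blast
  then show ?thesis
  proof cases
    case 1
    then show ?thesis using univ_E_canonD[OF s uw] by blast
  next
    case (2 t)
    then have "t \<in> nodes" "s \<noteq> t" unfolding node_edge_def by auto
    then show ?thesis using bag_overlap_clique[OF s _ _ uw \<open>u \<noteq> w\<close>] 2 by blast
  qed
qed

lemma contains_torso_univ:
  assumes s: "s \<in> nodes"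
  shows "contains VU EU (bag s) (torso_E univ_E node_edge bag s)"
  unfolding contains_def
proof (intro exI[of _ "inv_into VU (canon s)"] conjI ballI impI)
  show "inj_on (inv_into VU (canon s)) (bag s)" unfolding bag_def by (rule inj_on_inv_into) simp
  show "inv_into VU (canon s) ` bag s \<subseteq> VU" unfolding bag_def by (auto intro: inv_into_into)
  fix a b assume "a \<in> bag s" "b \<in> bag s" "torso_E univ_E node_edge bag s a b"
  then obtain u w where "u \<in> VU" "w \<in> VU" "a = canon s u" "b = canon s w"
    "torso_E univ_E node_edge bag s (canon s u) (canon s w)" by (auto simp: bag_def)
  then show "EU (inv_into VU (canon s) a) (inv_into VU (canon s) b)"
    using torso_univ_canonD[OF s] inj_on_canon[OF s] by simp
qed

lemma is_tree_nodes: "is_tree nodes node_edge"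
  unfolding is_tree_def
proof (intro conjI)
  show "simple_graph nodes node_edge" unfolding simple_graph_def node_edge_def by auto
  show "nodes \<noteq> {}" using nodes_Nil by blast
  show "connected_graph nodes node_edge"
  proof (rule connected_graphI_hub[where c = "[]"])
    show "node_edge t s" if "node_edge s t" for s t using that unfolding node_edge_def by blast
    show "(\<lambda>a b. node_edge a b \<and> a \<in> nodes \<and> b \<in> nodes)\<^sup>*\<^sup>* s []" if "s \<in> nodes" for s
      using that
    proof (induction s)
      case (Cons l s)
      then have "node_edge (l # s) s" unfolding node_edge_def by auto
      with Cons show ?case by (auto intro: converse_rtranclp_into_rtranclp)
    qed simp
  qed
  show "\<not> has_cycle nodes node_edge"
    by (rule not_has_cycle_if_edges_descend[where p = tl and rank = length])
      (auto simp: node_edge_def)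
qed

lemma walk_to_home:
  assumes "t \<in> nodes" "u \<in> VU"
  shows "(\<lambda>a b. node_edge a b \<and> a \<in> {x \<in> nodes. canon t u \<in> bag x}
      \<and> b \<in> {x \<in> nodes. canon t u \<in> bag x})\<^sup>*\<^sup>* t (fst (canon t u))"
  using assms
proof (induction t arbitrary: u)
  case (Cons l s)
  show ?case
  proof (cases "map_of (fst l) u")
    case (Some a)
    then have "(u, a) \<in> set (fst l)" by (rule map_of_SomeD)
    then have a: "a \<in> VU" using gluing_ok_pair(2)[of l u a] Cons.prems(1) by simp
    have "node_edge (l # s) s" "canon (l # s) u \<in> bag (l # s)" "canon s a \<in> bag s"
      using Cons.prems a unfolding node_edge_def bag_def by auto
    then show ?thesis using Cons.IH[of a] Cons.prems a Some
      by (auto intro: converse_rtranclp_into_rtranclp)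
  qed simp
qed simp

lemma tree_decomposition_univ: "tree_decomposition univ_V univ_E nodes node_edge bag"
  unfolding tree_decomposition_def
proof (intro conjI ballI allI impI)
  show "is_tree nodes node_edge" by (rule is_tree_nodes)
  show "bag s \<subseteq> univ_V" if "s \<in> nodes" for s using that by (auto simp: univ_V_def)
  fix a b assume "univ_E a b"
  then show "\<exists>s\<in>nodes. a \<in> bag s \<and> b \<in> bag s"
    unfolding univ_E_def bag_def using edge_in_VU by blast
next
  fix a assume "a \<in> univ_V"
  then show "{s \<in> nodes. a \<in> bag s} \<noteq> {}" by (auto simp: univ_V_def)
  show "connected_graph {s \<in> nodes. a \<in> bag s} node_edge"
  proof (rule connected_graphI_hub[where c = "fst a"])
    show "node_edge t s" if "node_edge s t" for s t using that unfolding node_edge_def by blast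
    fix s assume "s \<in> {s \<in> nodes. a \<in> bag s}"
    then obtain u where "s \<in> nodes" "u \<in> VU" "a = canon s u" by (auto simp: bag_def)
    then show "(\<lambda>x y. node_edge x y \<and> x \<in> {s \<in> nodes. a \<in> bag s}
        \<and> y \<in> {s \<in> nodes. a \<in> bag s})\<^sup>*\<^sup>* s (fst a)"
      using walk_to_home by blast
  qed
qed

lemma cgraph_univ: "cgraph univ_V univ_E"
  unfolding cgraph_def simple_graph_def
proof (intro conjI allI impI)
  show "countable univ_V" by simp
  fix a b assume "univ_E a b"
  then obtain s u w where s: "s \<in> nodes" and e: "EU u w" "a = canon s u" "b = canon s w"
    unfolding univ_E_def by blast
  have uw: "u \<in> VU" "w \<in> VU" "u \<noteq> w" "EU w u"
    using e(1) simple unfolding simple_graph_def by auto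
  show "a \<in> univ_V" "b \<in> univ_V" using s e uw by (auto simp: univ_V_def bag_def)
  show "a \<noteq> b" using inj_on_canon[OF s] e uw by (auto dest: inj_onD)
  show "univ_E b a" unfolding univ_E_def using s e uw by blast
qed

lemma in_D_univ: "in_D VU EU (to_nat ` univ_V) (map_edges to_nat univ_E)"
  using in_D_of_tree_decomposition[OF inj_to_nat inj_to_nat tree_decomposition_univ]
    contains_torso_univ .

end

section \<open>Embedding the graphs of D(U)\<close>

locale decomposed_graph = host_graph VU EU + rooted_tree VT ET root
  for VU :: "nat set" and EU and VT :: "nat set" and ET and root +
  fixes V :: "nat set" and E :: "nat \<Rightarrow> nat \<Rightarrow> bool"
    and B :: "nat \<Rightarrow> nat set" and g :: "nat \<Rightarrow> nat \<Rightarrow> nat"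
  assumes no_K: "\<not> contains VU EU K_aleph0_V K_aleph0_E"
    and simple_G: "simple_graph V E"
    and td: "tree_decomposition V E VT ET B"
    and g_inj: "x \<in> VT \<Longrightarrow> inj_on (g x) (B x)"
    and g_into: "x \<in> VT \<Longrightarrow> g x ` B x \<subseteq> VU"
    and g_torso: "x \<in> VT \<Longrightarrow> v \<in> B x \<Longrightarrow> w \<in> B x \<Longrightarrow> torso_E E ET B x v w \<Longrightarrow> EU (g x v) (g x w)"
begin

definition adhesion :: "nat \<Rightarrow> nat set" where
  "adhesion x = B x \<inter> B (parent x)"

text \<open>The tag \<open>x\<close> keeps the addresses of distinct nodes apart.\<close>

definition label :: "nat \<Rightarrow> gluing" where
  "label x = (map (\<lambda>v. (g x v, g (parent x) v)) (sorted_list_of_set (adhesion x)), x)"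

definition address :: "nat \<Rightarrow> node" where
  "address x = map (\<lambda>k. label ((parent ^^ k) x)) [0..<depth x]"

definition top_node :: "nat \<Rightarrow> nat" where
  "top_node v = (ARG_MIN depth x. x \<in> VT \<and> v \<in> B x)"

definition embed :: "nat \<Rightarrow> uvertex" where
  "embed v = (address (top_node v), g (top_node v) v)"

lemma address_root: "address root = []"
  by (simp add: address_def)

lemma address_Cons:
  assumes "x \<in> VT" "x \<noteq> root"
  shows "address x = label x # address (parent x)"
proof -
  have "depth x = Suc (depth (parent x))" using parent_spec[OF assms] by simp
  then show ?thesis
    unfolding address_def by (simp add: map_upt_Suc funpow_Suc_right del: funpow.simps upt_Suc)
qed

lemma clique_adhesion:
  assumes x: "x \<in> VT" "x \<noteq> root"
  shows "clique VU EU (g x ` adhesion x)" "clique VU EU (g (parent x) ` adhesion x)"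
proof -
  have clique: "clique VU EU (g y ` adhesion x)"
    if y: "y \<in> VT" "adhesion x \<subseteq> B y"
      and tor: "\<And>v w. v \<in> adhesion x \<Longrightarrow> w \<in> adhesion x \<Longrightarrow> v \<noteq> w \<Longrightarrow> torso_E E ET B y v w" for y
  proof -
    have "EU a b" if ab: "a \<in> g y ` adhesion x" "b \<in> g y ` adhesion x" "a \<noteq> b" for a b
    proof -
      obtain v w where "v \<in> adhesion x" "w \<in> adhesion x" "a = g y v" "b = g y w"
        using ab(1,2) by blast
      with ab(3) y(2) tor g_torso[OF y(1)] show ?thesis by blast
    qed
    moreover have "g y ` adhesion x \<subseteq> VU" using g_into[OF y(1)] y(2) by blast
    ultimately show ?thesis unfolding clique_def by blast
  qed
  have p: "parent x \<in> VT" "ET (parent x) x" "ET x (parent x)"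
    using parent_spec[OF x] edge_sym by auto
  show "clique VU EU (g x ` adhesion x)"
    by (rule clique) (use x(1) p(3) in \<open>auto simp: torso_E_def adhesion_def\<close>)
  show "clique VU EU (g (parent x) ` adhesion x)"
    by (rule clique) (use p(1,2) in \<open>auto simp: torso_E_def adhesion_def\<close>)
qed

lemma finite_adhesion:
  assumes x: "x \<in> VT" "x \<noteq> root"
  shows "finite (adhesion x)"
proof -
  have "inj_on (g x) (adhesion x)"
    using g_inj[OF x(1)] by (auto simp: adhesion_def intro: inj_on_subset)
  moreover have "finite (g x ` adhesion x)"
    by (rule finite_clique[OF no_K clique_adhesion(1)[OF x]])
  ultimately show ?thesis using finite_imageD by blast
qed

lemma set_label:
  "x \<in> VT \<Longrightarrow> x \<noteq> root \<Longrightarrow> set (fst (label x)) = (\<lambda>v. (g x v, g (parent x) v)) ` adhesion x"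
  using finite_adhesion unfolding label_def by simp

lemma gluing_ok_label:
  assumes x: "x \<in> VT" "x \<noteq> root"
  shows "gluing_ok (label x)"
proof -
  have "inj_on (g x) (adhesion x)" "inj_on (g (parent x)) (adhesion x)"
    using g_inj x(1) parent_in[OF x(1)] by (auto simp: adhesion_def intro: inj_on_subset)
  then have "distinct (map fst (fst (label x)))" "distinct (map snd (fst (label x)))"
    using finite_adhesion[OF x] by (simp_all add: label_def distinct_map o_def)
  moreover have "fst ` set (fst (label x)) = g x ` adhesion x"
    "snd ` set (fst (label x)) = g (parent x) ` adhesion x"
    using set_label[OF x] by force+
  ultimately show ?thesis using clique_adhesion[OF x] unfolding gluing_ok_def by simp
qed

lemma address_in_nodes:
  assumes x: "x \<in> VT"
  shows "address x \<in> nodes"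
  unfolding nodes_def
proof (intro CollectI ballI)
  fix l assume "l \<in> set (address x)"
  then obtain k where k: "k < depth x" "l = label ((parent ^^ k) x)"
    unfolding address_def by auto
  have "(parent ^^ k) x \<noteq> root"
    using depth_funpow_parent[OF x, of k] k(1) by auto
  then show "gluing_ok l" using k(2) gluing_ok_label funpow_parent_in[OF x] by simp
qed

lemma address_inj:
  assumes x: "x \<in> VT" and y: "y \<in> VT" and eq: "address x = address y"
  shows "x = y"
proof (cases "x = root \<or> y = root")
  case True
  then show ?thesis using eq x y
    by (cases "x = root"; cases "y = root") (simp_all add: address_root address_Cons)
next
  case False
  then have "label x = label y" using eq x y by (simp add: address_Cons)
  then show ?thesis by (simp add: label_def)
qed

lemma top_node:
  assumes "v \<in> V"
  shows "top_node v \<in> VT" "v \<in> B (top_node v)"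
    "\<And>y. y \<in> VT \<Longrightarrow> v \<in> B y \<Longrightarrow> depth (top_node v) \<le> depth y"
proof -
  obtain x where "x \<in> VT \<and> v \<in> B x" using td assms unfolding tree_decomposition_def by blast
  then have "(top_node v \<in> VT \<and> v \<in> B (top_node v)) \<and>
      (\<forall>y. y \<in> VT \<and> v \<in> B y \<longrightarrow> depth (top_node v) \<le> depth y)"
    unfolding top_node_def by (rule arg_min_nat_lemma)
  then show "top_node v \<in> VT" "v \<in> B (top_node v)"
    "\<And>y. y \<in> VT \<Longrightarrow> v \<in> B y \<Longrightarrow> depth (top_node v) \<le> depth y" by blast+
qed

lemma map_of_label:
  assumes x: "x \<in> VT" "x \<noteq> root" and v: "v \<in> B x"
  shows "map_of (fst (label x)) (g x v) = (if v \<in> adhesion x then Some (g (parent x) v) else None)"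
proof (cases "v \<in> adhesion x")
  case True
  have "distinct (map fst (fst (label x)))"
    using gluing_ok_label[OF x] unfolding gluing_ok_def by blast
  with True show ?thesis using set_label[OF x] by (simp add: map_of_is_SomeI)
next
  case False
  then have "g x v \<notin> g x ` adhesion x"
    using g_inj[OF x(1)] v unfolding adhesion_def by (auto dest: inj_onD)
  with False show ?thesis using set_label[OF x] by (force simp: map_of_eq_None_iff)
qed

lemma canon_address:
  assumes "x \<in> VT" "v \<in> B x"
  shows "canon (address x) (g x v) = embed v"
  using assms
proof (induction "depth x" arbitrary: x rule: less_induct)
  case less
  have x: "x \<in> VT" "v \<in> B x" by fact+
  have v: "v \<in> V" using td x unfolding tree_decomposition_def by blast
  define S where "S = {y \<in> VT. v \<in> B y}"
  have S: "S \<subseteq> VT" "connected_graph S ET"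
    using td v unfolding S_def tree_decomposition_def by auto
  show ?case
  proof (cases "x = top_node v")
    case True
    show ?thesis
    proof (cases "x = root")
      case False
      have "v \<notin> B (parent x)"
        using top_node(3)[OF v, of "parent x"] parent_spec[OF x(1) False] True by auto
      then show ?thesis
        using True False x map_of_label[OF x(1) False x(2)] address_Cons[OF x(1) False]
        by (simp add: embed_def adhesion_def)
    qed (simp add: True embed_def address_root)
  next
    case False
    have "parent x \<in> S"
      using parent_in_connected[OF S, of "top_node v" x] top_node[OF v] x False
      unfolding S_def by auto
    moreover have "x \<noteq> root"
    proof
      assume "x = root"
      then have "depth (top_node v) = 0" using top_node(3)[OF v x] by simp
      then show False using False \<open>x = root\<close> depth_eq_0_iff top_node(1)[OF v] by simp
    qed
    ultimately have "v \<in> adhesion x" "depth (parent x) < depth x" "parent x \<in> VT"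
      using x parent_spec[of x] unfolding S_def adhesion_def by auto
    then show ?thesis
      using less.hyps[of "parent x"] map_of_label[OF x(1) \<open>x \<noteq> root\<close> x(2)]
        address_Cons[OF x(1) \<open>x \<noteq> root\<close>] \<open>parent x \<in> S\<close> unfolding S_def by simp
  qed
qed

lemma contains_univ: "contains univ_V univ_E V E"
  unfolding contains_def
proof (intro exI[of _ embed] conjI ballI impI)
  show "inj_on embed V"
  proof (rule inj_onI)
    fix v w assume v: "v \<in> V" and w: "w \<in> V" and eq: "embed v = embed w"
    then have "top_node v = top_node w"
      using address_inj top_node(1) unfolding embed_def by auto
    then show "v = w"
      using eq g_inj top_node(1,2)[OF v] top_node(2)[OF w]
      unfolding embed_def by (auto dest: inj_onD)
  qed
  show "embed ` V \<subseteq> univ_V"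
  proof
    fix a assume "a \<in> embed ` V"
    then obtain v where v: "v \<in> V" "a = embed v" by blast
    then have "a = canon (address (top_node v)) (g (top_node v) v)"
      using canon_address top_node by simp
    then show "a \<in> univ_V"
      unfolding univ_V_def bag_def using address_in_nodes g_into top_node[OF v(1)] by blast
  qed
  fix v w assume "v \<in> V" "w \<in> V" "E v w"
  then obtain x where x: "x \<in> VT" "v \<in> B x" "w \<in> B x"
    using td unfolding tree_decomposition_def by blast
  have "v \<noteq> w" using simple_G \<open>E v w\<close> unfolding simple_graph_def by blast
  then have "EU (g x v) (g x w)" using g_torso x \<open>E v w\<close> unfolding torso_E_def by blast
  then have "univ_E (canon (address x) (g x v)) (canon (address x) (g x w))"
    unfolding univ_E_def using address_in_nodes[OF x(1)] by blast
  then show "univ_E (embed v) (embed w)" using canon_address x by simp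
qed

end

context host_graph
begin

lemma contains_univ_if_in_D:
  assumes no_K: "\<not> contains VU EU K_aleph0_V K_aleph0_E"
    and G: "cgraph V E" and D: "in_D VU EU V E"
  shows "contains univ_V univ_E V E"
proof -
  obtain VT :: "nat set" and ET B where td: "tree_decomposition V E VT ET B"
    and torsos: "\<forall>x\<in>VT. contains VU EU (B x) (torso_E E ET B x)"
    using D unfolding in_D_def by blast
  from torsos have "\<exists>g. \<forall>x\<in>VT. inj_on (g x) (B x) \<and> g x ` B x \<subseteq> VU \<and>
      (\<forall>v\<in>B x. \<forall>w\<in>B x. torso_E E ET B x v w \<longrightarrow> EU (g x v) (g x w))"
    unfolding contains_def by (rule bchoice)
  then obtain g where g: "\<forall>x\<in>VT. inj_on (g x) (B x) \<and> g x ` B x \<subseteq> VU \<and>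
      (\<forall>v\<in>B x. \<forall>w\<in>B x. torso_E E ET B x v w \<longrightarrow> EU (g x v) (g x w))" ..
  have tree: "is_tree VT ET" using td unfolding tree_decomposition_def by blast
  then obtain r where r: "r \<in> VT" unfolding is_tree_def by blast
  interpret decomposed_graph VU EU VT ET r V E B g
    using simple tree r no_K G td g unfolding cgraph_def by unfold_locales simp_all
  show ?thesis by (rule contains_univ)
qed

lemma universal_graph_nat:
  assumes no_K: "\<not> contains VU EU K_aleph0_V K_aleph0_E"
  shows "\<exists>VH EH. cgraph VH EH \<and> in_D VU EU VH EH \<and>
           (\<forall>V E. cgraph V E \<and> in_D VU EU V E \<longrightarrow> contains VH EH V E)"
proof (intro exI conjI allI impI)
  have H: "simple_graph univ_V univ_E" using cgraph_univ unfolding cgraph_def by blast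
  have f: "inj_on to_nat univ_V" by (rule inj_on_subset[OF inj_to_nat subset_UNIV])
  show "cgraph (to_nat ` univ_V) (map_edges to_nat univ_E)"
    using simple_graph_map_edges[OF f H] unfolding cgraph_def by simp
  show "in_D VU EU (to_nat ` univ_V) (map_edges to_nat univ_E)" by (rule in_D_univ)
  fix V E assume "cgraph V E \<and> in_D VU EU V E"
  then show "contains (to_nat ` univ_V) (map_edges to_nat univ_E) V E"
    using contains_univ_if_in_D[OF no_K] contains_map_edges_iff[OF f H] by blast
qed

end

theorem mainTheorem14:
  fixes VU :: "'u set" and EU :: "'u \<Rightarrow> 'u \<Rightarrow> bool"
  assumes "cgraph VU EU"
    and "\<not> contains VU EU K_aleph0_V K_aleph0_E"
  shows "\<exists>VH EH. cgraph VH EH \<and> in_D VU EU VH EH \<and>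
           (\<forall>V E. cgraph V E \<and> in_D VU EU V E \<longrightarrow> contains VH EH V E)"
proof -
  have U: "simple_graph VU EU" "countable VU" using assms(1) unfolding cgraph_def by auto
  define e where "e = to_nat_on VU"
  have e: "inj_on e VU" unfolding e_def using U(2) by (rule inj_on_to_nat_on)
  interpret host_graph "e ` VU" "map_edges e EU"
    by unfold_locales (rule simple_graph_map_edges[OF e U(1)])
  have "\<not> contains (e ` VU) (map_edges e EU) K_aleph0_V K_aleph0_E"
    using assms(2) contains_map_edges_iff[OF e U(1)] by blast
  from universal_graph_nat[OF this] show ?thesis
    by (simp add: in_D_map_edges_iff[OF e U(1)])
qed

end
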